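(* For non-negative integers $p_1,p_2,r$ and $x_1,x_2\in\mathbb{C}$, $$\sum_{l=0}^{p_1+p_2}S_{1,x_1}^{1,x_2,p_2}(p_1,l)\,(-1)^{l}(l+r)!=r!\,(x_1-r-1)^{p_1}(x_2-r-1)^{p_2}.$$ Consequently $B^{(0)}_{p_1,p_2}(x_1,x_2)=(x_1-1)^{p_1}(x_2-1)^{p_2}$ and $B^{(-1)}_{p_1,p_2}(x_1,x_2)=(x_1-2)^{p_1}(x_2-2)^{p_2}$.
   Context: For non-negative integers $p_1,p_2,l$ and $x_1,x_2\in\mathbb{C}$, the generalized Stirling numbers are $$S_{1,x_1}^{1,x_2,p_2}(p_1,l)=\frac{1}{l!}\sum_{j=0}^{l}(-1)^{j}\binom{l}{j}(l-j+x_1)^{p_1}(l-j+x_2)^{p_2}.$$ For an integer $k$, the bi-variate poly-Bernoulli polynomial is $$B^{(k)}_{p_1,p_2}(x_1,x_2)=\sum_{l=0}^{p_1+p_2}S_{1,x_1}^{1,x_2,p_2}(p_1,l)\frac{(-1)^{l}\,l!}{(l+1)^{k}}.$$ *)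

theory Defs
  imports Complex_Main
begin

definition genStirling :: "complex \<Rightarrow> complex \<Rightarrow> nat \<Rightarrow> nat \<Rightarrow> nat \<Rightarrow> complex" where
  "genStirling x1 x2 p2 p1 l =
     (1 / of_nat (fact l)) *
     (\<Sum>j=0..l. (-1) ^ j * of_nat (l choose j) *
        (of_nat (l - j) + x1) ^ p1 * (of_nat (l - j) + x2) ^ p2)"

definition polyBernoulli2 :: "int \<Rightarrow> nat \<Rightarrow> nat \<Rightarrow> complex \<Rightarrow> complex \<Rightarrow> complex" where
  "polyBernoulli2 k p1 p2 x1 x2 =
     (\<Sum>l=0..p1+p2. genStirling x1 x2 p2 p1 l * (-1) ^ l * of_nat (fact l)
        / (of_nat (l + 1)) powi k)"

end

theory Submission
  imports Defs "HOL-Computational_Algebra.Polynomial"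
begin

text \<open>
  With \<open>g z = (z + x1)^p1 * (z + x2)^p2\<close> and the forward difference
  \<open>\<Delta> g z = g (z + 1) - g z\<close>, the generalized Stirling number is
  \<open>\<Delta>^l g 0 / l!\<close>. Since \<open>g\<close> is a polynomial of degree \<open>p1 + p2\<close>, Newton's
  forward interpolation formula \<open>g t = \<Sum>l\<le>p1+p2. \<Delta>^l g 0 * (t gchoose l)\<close> is exact
  at every integer \<open>t\<close>. At \<open>t = -(r + 1)\<close> one has
  \<open>t gchoose l = (-1)^l * (r + l choose l)\<close>, and \<open>r! * l! * (r + l choose l) = (l + r)!\<close>
  turns the interpolation formula into the claimed identity. The poly-Bernoulli values
  are its cases \<open>r = 0\<close> and \<open>r = 1\<close>.
\<close>

definition forward_diff :: "('a::comm_ring_1 \<Rightarrow> 'a) \<Rightarrow> 'a \<Rightarrow> 'a" where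
  "forward_diff g z = g (z + 1) - g z"

lemma funpow_forward_diff_eq_sum:
  fixes g :: "'a::comm_ring_1 \<Rightarrow> 'a"
  shows "(forward_diff ^^ l) g z = (\<Sum>j=0..l. (-1)^j * of_nat (l choose j) * g (z + of_nat (l - j)))"
proof (induction l arbitrary: z)
  case 0
  then show ?case by simp
next
  case (Suc l)
  have pascal: "(of_nat (Suc l choose j) :: 'a)
      = of_nat (l choose j) + (if j = 0 then 0 else of_nat (l choose (j - 1)))" for j
    by (cases j) auto
  have "(\<Sum>j=0..Suc l. (-1)^j * of_nat (Suc l choose j) * g (z + of_nat (Suc l - j)))
     = (\<Sum>j=0..Suc l. (-1)^j * of_nat (l choose j) * g (z + of_nat (Suc l - j)))
     + (\<Sum>j=0..Suc l. (if j = 0 then 0 else (-1)^j * of_nat (l choose (j - 1)) * g (z + of_nat (Suc l - j))))"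
    unfolding sum.distrib[symmetric]
    by (rule sum.cong) (simp_all add: pascal algebra_simps)
  also have "(\<Sum>j=0..Suc l. (-1)^j * of_nat (l choose j) * g (z + of_nat (Suc l - j)))
     = (\<Sum>j=0..l. (-1)^j * of_nat (l choose j) * g ((z + 1) + of_nat (l - j)))"
    by (simp add: sum.atLeast0_atMost_Suc Suc_diff_le binomial_eq_0 algebra_simps)
  also have "(\<Sum>j=0..Suc l. (if j = 0 then 0 else (-1)^j * of_nat (l choose (j - 1)) * g (z + of_nat (Suc l - j))))
     = - (\<Sum>j=0..l. (-1)^j * of_nat (l choose j) * g (z + of_nat (l - j)))"
    unfolding sum.atLeast0_atMost_Suc_shift comp_def sum_negf[symmetric] by simp
  finally show ?case using Suc by (simp add: forward_diff_def)
qed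

lemma funpow_forward_diff_zero: "(forward_diff ^^ n) (\<lambda>_. 0) = (\<lambda>_. 0)"
  by (induction n) (auto simp: forward_diff_def)

lemma forward_diff_poly: "forward_diff (poly p) = poly (pcompose p [:1, 1:] - p)"
  by (rule ext) (simp add: forward_diff_def poly_pcompose algebra_simps)

lemma degree_forward_diff_less:
  fixes p :: "'a::idom poly"
  assumes "degree p > 0"
  shows "degree (pcompose p [:1, 1:] - p) < degree p"
proof -
  let ?q = "pcompose p [:1, 1:]"
  have deg_q: "degree ?q = degree p"
    by (simp add: degree_pcompose)
  have "coeff (?q - p) (degree p) = 0"
    using deg_q lead_coeff_comp[of "[:1, 1:]" p] by simp
  moreover have "degree (?q - p) \<le> degree p"
    using degree_diff_le[of ?q "degree p" p] deg_q by simp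
  ultimately show ?thesis
    using assms by (metis leading_coeff_0_iff degree_0 le_neq_implies_less)
qed

lemma funpow_forward_diff_poly_eq_0:
  fixes p :: "'a::idom poly"
  shows "degree p < n \<Longrightarrow> (forward_diff ^^ n) (poly p) = (\<lambda>_. 0)"
proof (induction n arbitrary: p)
  case 0
  then show ?case by simp
next
  case (Suc n)
  have unfold: "(forward_diff ^^ Suc n) (poly p) = (forward_diff ^^ n) (poly (pcompose p [:1, 1:] - p))"
    unfolding funpow_Suc_right comp_def forward_diff_poly by simp
  show ?case
  proof (cases "degree p = 0")
    case True
    then obtain c where "p = [:c:]" by (metis degree_eq_zeroE)
    then have "poly (pcompose p [:1, 1:] - p) = (\<lambda>_. 0)" by auto
    then show ?thesis
      using unfold funpow_forward_diff_zero by simp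
  next
    case False
    then show ?thesis
      using unfold Suc degree_forward_diff_less[of p] by simp
  qed
qed

lemma newton_forward_interpolation:
  fixes g :: "'a::field_char_0 \<Rightarrow> 'a"
  assumes "(forward_diff ^^ n) g = (\<lambda>_. 0)"
  shows "g (of_int t) = (\<Sum>l<n. (forward_diff ^^ l) g 0 * (of_int t gchoose l))"
  using assms
proof (induction n arbitrary: g t)
  case 0
  then show ?case by simp
next
  case (Suc n)
  have "(forward_diff ^^ n) (forward_diff g) = (\<lambda>_. 0)"
    using Suc.prems unfolding funpow_Suc_right comp_def by simp
  note IH = Suc.IH[OF this]
  define h where "h z = g z - (\<Sum>l<Suc n. (forward_diff ^^ l) g 0 * (z gchoose l))" for z
  \<comment> \<open>Pascal's rule makes the interpolant's difference the interpolant of \<open>\<Delta> g\<close>.\<close>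
  have h_step: "h (of_int i + 1) = h (of_int i)" for i :: int
  proof -
    have "(\<Sum>l<Suc n. (forward_diff ^^ l) g 0 * ((of_int i + 1) gchoose l))
          - (\<Sum>l<Suc n. (forward_diff ^^ l) g 0 * (of_int i gchoose l))
        = (\<Sum>l<Suc n. (forward_diff ^^ l) g 0 * (((of_int i + 1) gchoose l) - (of_int i gchoose l)))"
      by (simp add: sum_subtractf algebra_simps)
    also have "\<dots> = (\<Sum>l<n. (forward_diff ^^ Suc l) g 0 * (of_int i gchoose l))"
      unfolding sum.lessThan_Suc_shift by (simp add: gbinomial_Suc_Suc)
    also have "\<dots> = forward_diff g (of_int i)"
      by (simp only: IH[of i] funpow_Suc_right comp_def)
    finally show ?thesis by (simp add: h_def forward_diff_def algebra_simps)
  qed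
  have h_0: "h 0 = 0"
    unfolding h_def sum.lessThan_Suc_shift by (simp add: gbinomial_0_left)
  have "h (of_int i) = 0" for i :: int
  proof (induction i rule: int_induct[where k = 0])
    case base then show ?case using h_0 by simp
  next
    case (step1 i) then show ?case using h_step[of i] by simp
  next
    case (step2 i) then show ?case using h_step[of "i - 1"] by simp
  qed
  then show ?case by (simp add: h_def)
qed

lemma gbinomial_minus_of_nat_Suc:
  "(- (of_nat r + 1) :: 'a::field_char_0) gchoose l = (-1)^l * of_nat (r + l choose l)"
proof -
  have "(- (of_nat r + 1) :: 'a) gchoose l = (-1)^l * ((of_nat r + 1 + of_nat l - 1) gchoose l)"
    by (rule gbinomial_minus)
  also have "(of_nat r + 1 + of_nat l - 1 :: 'a) = of_nat (r + l)"
    by simp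
  finally show ?thesis by (simp add: binomial_gbinomial)
qed

lemma fact_add_eq_fact_mult_choose:
  "(fact (l + r) :: 'a::semiring_char_0) = fact r * fact l * of_nat (r + l choose l)"
proof -
  have "fact (l + r) = fact r * fact l * (r + l choose l)"
    using binomial_fact_lemma[of l "r + l"] by (simp add: ac_simps)
  then show ?thesis
    by (metis of_nat_fact of_nat_mult)
qed

lemma genStirling_eq_forward_diff:
  "genStirling x1 x2 p2 p1 l
     = (forward_diff ^^ l) (\<lambda>z. (z + x1)^p1 * (z + x2)^p2) 0 / of_nat (fact l)"
  unfolding funpow_forward_diff_eq_sum genStirling_def by (simp add: mult.assoc)

lemma genStirling_factorial_sum:
  fixes p1 p2 r :: nat and x1 x2 :: complex
  shows "(\<Sum>l=0..p1+p2. genStirling x1 x2 p2 p1 l * (-1) ^ l * of_nat (fact (l + r)))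
           = of_nat (fact r) * (x1 - of_nat r - 1) ^ p1 * (x2 - of_nat r - 1) ^ p2"
proof -
  define g where "g z = (z + x1)^p1 * (z + x2)^p2" for z :: complex
  define t :: complex where "t = - (of_nat r + 1)"
  have "g = poly ([:x1, 1:]^p1 * [:x2, 1:]^p2)"
    by (rule ext) (simp add: g_def algebra_simps)
  moreover have "degree ([:x1, 1:]^p1 * [:x2, 1:]^p2 :: complex poly) = p1 + p2"
    by (simp add: degree_mult_eq degree_power_eq)
  ultimately have "(forward_diff ^^ Suc (p1 + p2)) g = (\<lambda>_. 0)"
    using funpow_forward_diff_poly_eq_0 by (metis lessI)
  from newton_forward_interpolation[OF this, of "- (int r + 1)"]
  have newton: "g t = (\<Sum>l\<le>p1+p2. (forward_diff ^^ l) g 0 * (t gchoose l))"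
    by (simp add: t_def lessThan_Suc_atMost)
  have "genStirling x1 x2 p2 p1 l * (-1) ^ l * of_nat (fact (l + r))
      = of_nat (fact r) * ((forward_diff ^^ l) g 0 * (t gchoose l))" for l
    unfolding genStirling_eq_forward_diff g_def[symmetric] t_def gbinomial_minus_of_nat_Suc
    by (simp add: fact_add_eq_fact_mult_choose)
  then have "(\<Sum>l=0..p1+p2. genStirling x1 x2 p2 p1 l * (-1) ^ l * of_nat (fact (l + r)))
      = of_nat (fact r) * g t"
    by (simp add: newton sum_distrib_left atLeast0AtMost)
  then show ?thesis
    by (simp add: g_def t_def algebra_simps)
qed

theorem mainTheorem7:
  fixes p1 p2 r :: nat and x1 x2 :: complex
  shows "((\<Sum>l=0..p1+p2. genStirling x1 x2 p2 p1 l * (-1) ^ l * of_nat (fact (l + r)))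
           = of_nat (fact r) * (x1 - of_nat r - 1) ^ p1 * (x2 - of_nat r - 1) ^ p2)
       \<and> polyBernoulli2 0 p1 p2 x1 x2 = (x1 - 1) ^ p1 * (x2 - 1) ^ p2
       \<and> polyBernoulli2 (-1) p1 p2 x1 x2 = (x1 - 2) ^ p1 * (x2 - 2) ^ p2"
proof (intro conjI)
  show "polyBernoulli2 0 p1 p2 x1 x2 = (x1 - 1) ^ p1 * (x2 - 1) ^ p2"
    using genStirling_factorial_sum[of x1 x2 p2 p1 0] unfolding polyBernoulli2_def by simp
  have "polyBernoulli2 (-1) p1 p2 x1 x2
      = (\<Sum>l=0..p1+p2. genStirling x1 x2 p2 p1 l * (-1) ^ l * of_nat (fact (l + 1)))"
    unfolding polyBernoulli2_def
    by (rule sum.cong) (simp_all add: power_int_minus divide_inverse algebra_simps)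
  then show "polyBernoulli2 (-1) p1 p2 x1 x2 = (x1 - 2) ^ p1 * (x2 - 2) ^ p2"
    using genStirling_factorial_sum[of x1 x2 p2 p1 1] by (simp add: algebra_simps)
qed (rule genStirling_factorial_sum)

end
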